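(* Let $x \in \mathbb{R}^p$ be a random vector that follows the block-independent model with blocks of sizes $d_j$, and let $K = \max_{1\le i \le p} \mathbb{E}x_i^4$ be the largest fourth moment of the entries of $x$. Then for every deterministic matrix $A \in \mathbb{R}^{p\times p}$, $$\operatorname{Var}(x^\mathsf{T} A x) \le \|A\|^2\Big(K\sum_j d_j^2 + 2p\Big),$$ where $\|A\|$ is the spectral (operator) norm.
   Context: Block-independent model: a random vector $x \in \mathbb{R}^p$ follows the block-independent model with blocks of sizes $d_j$ if $\mathbb{E}x = 0$, $\mathbb{E} x x^\mathsf{T} = I_p$ (isotropy), and the coordinate index set $[p]$ is partitioned into disjoint blocks $I_1, I_2,\dots$ with $|I_j| = d_j$ such that the sub-vectors $(x_i)_{i \in I_j}$, $j=1,2,\dots$, are mutually independent (entries within the same block may be dependent). *)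

theory Defs
  imports "HOL-Analysis.Analysis" "HOL-Probability.Probability"
begin

text \<open>Block-independent model for a random vector x in R^p, where the coordinate
index set is the finite type 'n (p = CARD('n)) and P is the partition of the
coordinates into blocks.\<close>

definition block_independent_model ::
  "'a measure \<Rightarrow> ('a \<Rightarrow> real^'n::finite) \<Rightarrow> 'n set set \<Rightarrow> bool" where
  "block_independent_model M x P \<longleftrightarrow>
     prob_space M \<and>
     x \<in> borel_measurable M \<and>
     (\<forall>i. integrable M (\<lambda>\<omega>. x \<omega> $ i) \<and> integral\<^sup>L M (\<lambda>\<omega>. x \<omega> $ i) = 0) \<and>
     (\<forall>i j. integrable M (\<lambda>\<omega>. x \<omega> $ i * x \<omega> $ j) \<and>
            integral\<^sup>L M (\<lambda>\<omega>. x \<omega> $ i * x \<omega> $ j) = (if i = j then 1 else 0)) \<and>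
     partition_on UNIV P \<and>
     prob_space.indep_vars M (\<lambda>B. Pi\<^sub>M B (\<lambda>_. borel))
        (\<lambda>B \<omega>. restrict (\<lambda>i. x \<omega> $ i) B) P"

definition var_of :: "'a measure \<Rightarrow> ('a \<Rightarrow> real) \<Rightarrow> real" where
  "var_of M X = integral\<^sup>L M (\<lambda>\<omega>. (X \<omega> - integral\<^sup>L M X)\<^sup>2)"

end

theory Submission
  imports Defs
begin

text \<open>
  Write Q = x^T A x = sum a_ij x_i x_j, so that Var Q = sum a_ij a_kl (E x_i x_j x_k x_l - d_ij d_kl)
  with d the Kronecker delta. Zero means, isotropy and independence across blocks determine every
  fourth moment whose indices do not all lie in one block: it equals
  d_ij d_kl + [i, j in different blocks] (d_ik d_jl + d_il d_jk).
  Hence Var Q = sum_B Var Q_B + sum over i, j in different blocks of (a_ij^2 + a_ij a_ji), where Q_B is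
  the quadratic form of x restricted to the block B. The first sum is at most
  sum_B E Q_B^2 <= ||A||^2 sum_B E |x_B|^4 <= ||A||^2 K sum_B d_B^2, and the second at most
  2 ||A||_F^2 <= 2 p ||A||^2.
\<close>

lemma abs_mult4_le_sum_power4:
  fixes a b c d :: real
  shows "\<bar>a * b * c * d\<bar> \<le> (a ^ 4 + b ^ 4 + c ^ 4 + d ^ 4) / 4"
proof -
  have am_gm: "u * v \<le> (u\<^sup>2 + v\<^sup>2) / 2" for u v :: real
    using sum_squares_bound[of u v] by (simp add: field_simps)
  have "\<bar>a * b * c * d\<bar> = \<bar>a * b\<bar> * \<bar>c * d\<bar>" by (simp add: abs_mult)
  also have "\<dots> \<le> ((a\<^sup>2 + b\<^sup>2) / 2) * ((c\<^sup>2 + d\<^sup>2) / 2)"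
    using am_gm[of "\<bar>a\<bar>" "\<bar>b\<bar>"] am_gm[of "\<bar>c\<bar>" "\<bar>d\<bar>"]
    by (intro mult_mono) (auto simp: abs_mult)
  also have "\<dots> \<le> (((a\<^sup>2 + b\<^sup>2) / 2)\<^sup>2 + ((c\<^sup>2 + d\<^sup>2) / 2)\<^sup>2) / 2"
    by (rule am_gm)
  also have "\<dots> \<le> (a ^ 4 + b ^ 4 + c ^ 4 + d ^ 4) / 4"
  proof -
    have "(u\<^sup>2 + v\<^sup>2)\<^sup>2 \<le> 2 * (u ^ 4 + v ^ 4)" for u v :: real
      using sum_squares_bound[of "u\<^sup>2" "v\<^sup>2"]
      by (simp add: power2_eq_square power4_eq_xxxx algebra_simps)
    from this[of a b] this[of c d] show ?thesis by (simp add: power_divide)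
  qed
  finally show ?thesis .
qed

lemma abs_prod_list_le_one_plus_sum_power4:
  fixes f :: "'n::finite \<Rightarrow> real"
  assumes "length L \<le> 4"
  shows "\<bar>prod_list (map f L)\<bar> \<le> 1 + (\<Sum>m\<in>UNIV. f m ^ 4)"
proof -
  define L' where "L' = map f L @ replicate (4 - length L) 1"
  have "f m ^ 4 \<le> (\<Sum>m\<in>UNIV. f m ^ 4)" for m
    by (rule member_le_sum) auto
  then have "f m ^ 4 \<le> 1 + (\<Sum>m\<in>UNIV. f m ^ 4)" for m
    by (rule add_increasing[OF zero_le_one])
  moreover have "0 \<le> (\<Sum>m\<in>UNIV. f m ^ 4)" by (intro sum_nonneg) simp
  ultimately have power4_le: "e ^ 4 \<le> 1 + (\<Sum>m\<in>UNIV. f m ^ 4)" if "e \<in> set L'" for e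
    using that by (auto simp: L'_def)
  have "length L' = 4" using assms by (simp add: L'_def)
  then obtain a b c d where L': "L' = [a, b, c, d]"
    by (auto simp: length_Suc_conv numeral_eq_Suc)
  have "prod_list (map f L) = prod_list L'" by (simp add: L'_def)
  then have "\<bar>prod_list (map f L)\<bar> = \<bar>a * b * c * d\<bar>" by (simp add: L' mult.assoc)
  also have "\<dots> \<le> (a ^ 4 + b ^ 4 + c ^ 4 + d ^ 4) / 4" by (rule abs_mult4_le_sum_power4)
  also have "\<dots> \<le> 1 + (\<Sum>m\<in>UNIV. f m ^ 4)"
    using power4_le[of a] power4_le[of b] power4_le[of c] power4_le[of d] by (simp add: L')
  finally show ?thesis .
qed

lemma power2_double_sum:
  fixes t :: "'i \<Rightarrow> 'j \<Rightarrow> 'b::comm_semiring_1"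
  shows "(\<Sum>i\<in>I. \<Sum>j\<in>J. t i j)\<^sup>2 = (\<Sum>i\<in>I. \<Sum>j\<in>J. \<Sum>k\<in>I. \<Sum>l\<in>J. t i j * t k l)"
  by (simp only: power2_eq_square sum_distrib_right) (simp only: sum_distrib_left)

definition kronecker :: "'n \<Rightarrow> 'n \<Rightarrow> real" where
  "kronecker i j = (if i = j then 1 else 0)"

lemma sum_mult_kronecker_pair:
  fixes f :: "'n::finite \<Rightarrow> 'n \<Rightarrow> real"
  shows "(\<Sum>k\<in>UNIV. \<Sum>l\<in>UNIV. f k l * (kronecker p k * kronecker q l)) = f p q"
proof -
  have "f k l * (kronecker p k * kronecker q l) = (if l = q then if k = p then f k l else 0 else 0)"
    for k l by (simp add: kronecker_def)
  then show ?thesis by simp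
qed

lemma sum_mult_kronecker_sym:
  fixes f :: "'n::finite \<Rightarrow> 'n \<Rightarrow> real"
  shows "(\<Sum>k\<in>UNIV. \<Sum>l\<in>UNIV. f k l * (kronecker i k * kronecker j l + kronecker i l * kronecker j k))
    = f i j + f j i"
proof -
  have "(\<Sum>k\<in>UNIV. \<Sum>l\<in>UNIV. f k l * (kronecker i l * kronecker j k))
      = (\<Sum>k\<in>UNIV. \<Sum>l\<in>UNIV. f k l * (kronecker j k * kronecker i l))"
    by (simp add: mult.commute)
  then show ?thesis
    using sum_mult_kronecker_pair[of f i j] sum_mult_kronecker_pair[of f j i]
    by (simp add: distrib_left sum.distrib)
qed

lemma sum_square_entries_le_onorm:
  fixes A :: "real^'n::finite^'n"
  shows "(\<Sum>i\<in>UNIV. \<Sum>j\<in>UNIV. (A $ i $ j)\<^sup>2) \<le> real CARD('n) * (onorm (\<lambda>v. A *v v))\<^sup>2"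
proof -
  have column_le: "(\<Sum>i\<in>UNIV. (A $ i $ j)\<^sup>2) \<le> (onorm (\<lambda>v. A *v v))\<^sup>2" for j
  proof -
    have "(\<Sum>i\<in>UNIV. (A $ i $ j)\<^sup>2) = (norm (A *v axis j 1))\<^sup>2"
      unfolding matrix_vector_mult_basis power2_norm_eq_inner inner_vec_def column_def
      by (simp add: power2_eq_square)
    also have "\<dots> \<le> (onorm (\<lambda>v. A *v v) * norm (axis j (1::real)))\<^sup>2"
      by (intro power_mono onorm) auto
    finally show ?thesis by simp
  qed
  have "(\<Sum>i\<in>UNIV. \<Sum>j\<in>UNIV. (A $ i $ j)\<^sup>2) = (\<Sum>j\<in>UNIV. \<Sum>i\<in>UNIV. (A $ i $ j)\<^sup>2)"
    by (rule sum.swap)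
  also have "\<dots> \<le> (\<Sum>j\<in>(UNIV::'n set). (onorm (\<lambda>v. A *v v))\<^sup>2)"
    by (intro sum_mono column_le)
  finally show ?thesis by simp
qed

lemma sum_masked_square_add_transpose_le:
  fixes A :: "real^'n::finite^'n"
  shows "(\<Sum>i\<in>UNIV. \<Sum>j\<in>UNIV. of_bool (c i j) * ((A $ i $ j)\<^sup>2 + A $ i $ j * A $ j $ i))
     \<le> 2 * (\<Sum>i\<in>UNIV. \<Sum>j\<in>UNIV. (A $ i $ j)\<^sup>2)"
proof -
  have term_le: "of_bool b * (p\<^sup>2 + p * q) \<le> 3/2 * p\<^sup>2 + 1/2 * q\<^sup>2" for b and p q :: real
    using sum_squares_bound[of p q] by (cases b) (simp_all add: field_simps)
  have "(\<Sum>i\<in>UNIV. \<Sum>j\<in>UNIV. of_bool (c i j) * ((A $ i $ j)\<^sup>2 + A $ i $ j * A $ j $ i))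
     \<le> (\<Sum>i\<in>UNIV. \<Sum>j\<in>UNIV. 3/2 * (A $ i $ j)\<^sup>2 + 1/2 * (A $ j $ i)\<^sup>2)"
    by (intro sum_mono term_le)
  also have "\<dots> = 3/2 * (\<Sum>i\<in>UNIV. \<Sum>j\<in>UNIV. (A $ i $ j)\<^sup>2) + 1/2 * (\<Sum>i\<in>UNIV. \<Sum>j\<in>UNIV. (A $ j $ i)\<^sup>2)"
    by (simp add: sum.distrib sum_distrib_left)
  also have "(\<Sum>i\<in>UNIV. \<Sum>j\<in>UNIV. (A $ j $ i)\<^sup>2) = (\<Sum>i\<in>UNIV. \<Sum>j\<in>UNIV. (A $ i $ j)\<^sup>2)"
    by (rule sum.swap)
  finally show ?thesis by simp
qed

lemma restricted_quadratic_form_eq: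
  fixes A :: "real^'n::finite^'n" and v y :: "real^'n" and B :: "'n set"
  assumes y: "y = (\<chi> i. if i \<in> B then v $ i else 0)"
  shows "y \<bullet> (A *v y) = (\<Sum>i\<in>B. \<Sum>j\<in>B. A $ i $ j * (v $ i * v $ j))"
    and "(norm y)\<^sup>2 = (\<Sum>i\<in>B. (v $ i)\<^sup>2)"
proof -
  have "y \<bullet> (A *v y) = (\<Sum>i\<in>UNIV. \<Sum>j\<in>UNIV.
      if i \<in> B then if j \<in> B then A $ i $ j * (v $ i * v $ j) else 0 else 0)"
    unfolding inner_vec_def matrix_vector_mult_def y
    by (auto simp: sum_distrib_left mult_ac intro!: sum.cong)
  also have "\<dots> = (\<Sum>i\<in>B. \<Sum>j\<in>B. A $ i $ j * (v $ i * v $ j))"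
    by (simp add: sum.If_cases if_distrib[of "sum _"] cong: if_cong)
  finally show "y \<bullet> (A *v y) = (\<Sum>i\<in>B. \<Sum>j\<in>B. A $ i $ j * (v $ i * v $ j))" .
  have "(norm y)\<^sup>2 = (\<Sum>i\<in>UNIV. if i \<in> B then (v $ i)\<^sup>2 else 0)"
    unfolding power2_norm_eq_inner inner_vec_def y
    by (intro sum.cong refl) (auto simp: power2_eq_square)
  then show "(norm y)\<^sup>2 = (\<Sum>i\<in>B. (v $ i)\<^sup>2)"
    by (simp add: sum.If_cases)
qed

lemma restricted_quadratic_form_square_le:
  fixes A :: "real^'n::finite^'n" and v :: "real^'n"
  shows "(\<Sum>i\<in>B. \<Sum>j\<in>B. A $ i $ j * (v $ i * v $ j))\<^sup>2
    \<le> (onorm (\<lambda>v. A *v v))\<^sup>2 * (real (card B) * (\<Sum>i\<in>B. (v $ i) ^ 4))"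
proof -
  define y where "y = (\<chi> i. if i \<in> B then v $ i else 0)"
  note restricted = restricted_quadratic_form_eq[OF y_def]
  have "\<bar>y \<bullet> (A *v y)\<bar> \<le> norm y * norm (A *v y)" by (rule Cauchy_Schwarz_ineq2)
  also have "\<dots> \<le> norm y * (onorm (\<lambda>v. A *v v) * norm y)"
    by (intro mult_left_mono onorm) auto
  finally have "\<bar>y \<bullet> (A *v y)\<bar> \<le> onorm (\<lambda>v. A *v v) * (norm y)\<^sup>2"
    by (simp add: power2_eq_square mult_ac)
  from power_mono[OF this abs_ge_zero, of 2]
  have "(y \<bullet> (A *v y))\<^sup>2 \<le> (onorm (\<lambda>v. A *v v))\<^sup>2 * ((norm y)\<^sup>2)\<^sup>2"
    by (simp add: power_mult_distrib)
  also have "\<dots> = (onorm (\<lambda>v. A *v v))\<^sup>2 * (\<Sum>i\<in>B. (v $ i)\<^sup>2)\<^sup>2"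
    by (simp only: restricted(2))
  also have "\<dots> \<le> (onorm (\<lambda>v. A *v v))\<^sup>2 * (real (card B) * (\<Sum>i\<in>B. (v $ i) ^ 4))"
    using sum_squared_le_sum_of_squares[of "\<lambda>i. (v $ i)\<^sup>2" B]
    by (intro mult_left_mono) (simp_all add: mult.commute flip: power_mult)
  finally show ?thesis by (simp add: restricted(1))
qed

lemma (in prob_space) var_of_eq:
  assumes "integrable M X" "integrable M (\<lambda>\<omega>. (X \<omega>)\<^sup>2)"
  shows "var_of M X = expectation (\<lambda>\<omega>. (X \<omega>)\<^sup>2) - (expectation X)\<^sup>2"
proof -
  define c where "c = expectation X"
  have "var_of M X = expectation (\<lambda>\<omega>. (X \<omega>)\<^sup>2 - 2 * c * X \<omega> + c\<^sup>2)"
    unfolding var_of_def c_def by (simp add: power2_diff algebra_simps)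
  also have "\<dots> = expectation (\<lambda>\<omega>. (X \<omega>)\<^sup>2) - 2 * c * c + c\<^sup>2"
    using assms by (simp add: prob_space c_def)
  finally show ?thesis by (simp add: c_def power2_eq_square)
qed

lemma borel_measurable_prod_list_PiM:
  "set L \<subseteq> I \<Longrightarrow> (\<lambda>v::'i \<Rightarrow> real. prod_list (map v L)) \<in> borel_measurable (Pi\<^sub>M I (\<lambda>_. borel))"
  by (induction L) (auto intro!: borel_measurable_times measurable_component_singleton)

lemma four_indices_cases:
  fixes b :: "'n \<Rightarrow> 'b"
  assumes "\<not> (b j = b i \<and> b k = b i \<and> b l = b i)"
  shows "(b j = b i \<and> b l = b k) \<or> (b k = b i \<and> b l = b j \<and> b j \<noteq> b i)
     \<or> (b l = b i \<and> b k = b j \<and> b j \<noteq> b i)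
     \<or> (\<exists>m\<in>{i, j, k, l}. filter (\<lambda>n. b n = b m) [i, j, k, l] = [m])"
  using assms by auto

lemma filter_singleton_unpaired:
  fixes b :: "'n \<Rightarrow> 'b"
  assumes "m \<in> {i, j, k, l}" "filter (\<lambda>n. b n = b m) [i, j, k, l] = [m]"
  shows "\<not> (i = j \<and> k = l)" "\<not> (i = k \<and> j = l)" "\<not> (i = l \<and> j = k)"
  using assms by (auto split: if_split_asm)

text \<open>Unlike the model, the locale does not assume integrability of the x_i and x_i x_j: every
  product of at most four coordinates is integrable once the fourth powers are.\<close>

locale block_independent = prob_space M for M :: "'a measure" +
  fixes x :: "'a \<Rightarrow> real^'n::finite" and P :: "'n set set"
  assumes measurable_x: "x \<in> borel_measurable M"
    and mean_zero: "\<And>i. expectation (\<lambda>\<omega>. x \<omega> $ i) = 0"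
    and isotropic: "\<And>i j. expectation (\<lambda>\<omega>. x \<omega> $ i * x \<omega> $ j) = (if i = j then 1 else 0)"
    and partition: "partition_on UNIV P"
    and indep_blocks: "indep_vars (\<lambda>B. Pi\<^sub>M B (\<lambda>_. borel)) (\<lambda>B \<omega>. restrict (\<lambda>i. x \<omega> $ i) B) P"
    and integrable_power4: "\<And>i. integrable M (\<lambda>\<omega>. (x \<omega> $ i) ^ 4)"
begin

definition block_of :: "'n \<Rightarrow> 'n set" where
  "block_of i = (THE B. B \<in> P \<and> i \<in> B)"

lemma ex1_block: "\<exists>!B. B \<in> P \<and> i \<in> B"
proof -
  obtain B where "B \<in> P" "i \<in> B" using partition_onD1[OF partition] by blast
  moreover have "C = B" if "C \<in> P" "i \<in> C" for C
    using partition_onD2[OF partition] that \<open>B \<in> P\<close> \<open>i \<in> B\<close> by (metis disjnt_iff pairwiseD)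
  ultimately show ?thesis by blast
qed

lemma block_of_in: "block_of i \<in> P" and in_block_of: "i \<in> block_of i"
  using theI'[OF ex1_block[of i]] unfolding block_of_def by auto

lemma in_block_iff: "B \<in> P \<Longrightarrow> i \<in> B \<longleftrightarrow> B = block_of i"
  using ex1_block[of i] block_of_in[of i] in_block_of[of i] by blast

lemma finite_blocks: "finite P"
  by (rule finite_subset[of _ "Pow UNIV"]) auto

lemma sum_blocks: "(\<Sum>B\<in>P. \<Sum>i\<in>B. g B i) = (\<Sum>i\<in>UNIV. g (block_of i) i)"
proof -
  have "(\<Sum>B\<in>P. \<Sum>i\<in>B. g B i) = (\<Sum>B\<in>P. \<Sum>i\<in>B. g (block_of i) i)"
    by (intro sum.cong refl) (simp add: in_block_iff)
  also have "\<dots> = (\<Sum>i\<in>\<Union>P. g (block_of i) i)"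
    using partition_onD2[OF partition]
    by (subst sum.Union_disjoint) (auto simp: pairwise_def disjnt_def)
  finally show ?thesis using partition_onD1[OF partition] by simp
qed

lemma sum_block_of: "(\<Sum>j\<in>block_of i. (g j :: real)) = (\<Sum>j\<in>UNIV. of_bool (block_of j = block_of i) * g j)"
proof -
  have "(\<Sum>j\<in>UNIV. of_bool (block_of j = block_of i) * g j)
      = (\<Sum>j\<in>UNIV. if block_of j = block_of i then g j else 0)"
    by (intro sum.cong) auto
  also have "\<dots> = sum g {j. block_of j = block_of i}"
    by (simp add: sum.If_cases)
  also have "{j. block_of j = block_of i} = block_of i"
    using in_block_iff[OF block_of_in] by auto
  finally show ?thesis ..
qed

lemma coordinate_measurable [measurable]: "(\<lambda>\<omega>. x \<omega> $ i) \<in> borel_measurable M"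
  using measurable_compose[OF measurable_x borel_measurable_nth] by simp

lemma integrable_prod_coordinates:
  assumes "length L \<le> 4"
  shows "integrable M (\<lambda>\<omega>. prod_list (map (\<lambda>m. x \<omega> $ m) L))"
proof (rule Bochner_Integration.integrable_bound)
  show "integrable M (\<lambda>\<omega>. 1 + (\<Sum>m\<in>UNIV. (x \<omega> $ m) ^ 4))"
    using integrable_power4 by (intro Bochner_Integration.integrable_add integrable_sum) auto
  show "(\<lambda>\<omega>. prod_list (map (\<lambda>m. x \<omega> $ m) L)) \<in> borel_measurable M"
    by (induction L) auto
  show "AE \<omega> in M. norm (prod_list (map (\<lambda>m. x \<omega> $ m) L)) \<le> norm (1 + (\<Sum>m\<in>UNIV. (x \<omega> $ m) ^ 4))"
    using abs_prod_list_le_one_plus_sum_power4[OF assms] by (intro AE_I2) (auto simp: sum_nonneg)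
qed

lemma prod_list_split_blocks:
  "prod_list (map g L) = (\<Prod>B\<in>P. prod_list (map g (filter (\<lambda>m. m \<in> B) L)))"
proof (induction L)
  case (Cons a L)
  have "(\<Prod>B\<in>P. prod_list (map g (filter (\<lambda>m. m \<in> B) (a # L))))
      = (\<Prod>B\<in>P. (if B = block_of a then g a else 1) * prod_list (map g (filter (\<lambda>m. m \<in> B) L)))"
    by (intro prod.cong refl) (auto simp: in_block_iff)
  also have "\<dots> = g a * (\<Prod>B\<in>P. prod_list (map g (filter (\<lambda>m. m \<in> B) L)))"
    by (simp add: prod.distrib prod.delta' finite_blocks block_of_in)
  finally show ?case using Cons by simp
qed simp

lemma expectation_prod_coordinates_factor:
  assumes "length L \<le> 4"
  shows "expectation (\<lambda>\<omega>. prod_list (map (\<lambda>m. x \<omega> $ m) L))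
     = (\<Prod>B\<in>P. expectation (\<lambda>\<omega>. prod_list (map (\<lambda>m. x \<omega> $ m) (filter (\<lambda>m. m \<in> B) L))))"
proof -
  have "indep_vars (\<lambda>_. borel)
      (\<lambda>B \<omega>. prod_list (map (restrict (\<lambda>i. x \<omega> $ i) B) (filter (\<lambda>m. m \<in> B) L))) P"
    by (rule indep_vars_compose2[OF indep_blocks]) (auto intro: borel_measurable_prod_list_PiM)
  moreover have "prod_list (map (restrict (\<lambda>i. x \<omega> $ i) B) (filter (\<lambda>m. m \<in> B) L))
      = prod_list (map (\<lambda>m. x \<omega> $ m) (filter (\<lambda>m. m \<in> B) L))" for B \<omega>
    by (intro arg_cong[where f = prod_list] map_cong) auto
  ultimately have "indep_vars (\<lambda>_. borel)
      (\<lambda>B \<omega>. prod_list (map (\<lambda>m. x \<omega> $ m) (filter (\<lambda>m. m \<in> B) L))) P"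
    by simp
  moreover have "integrable M (\<lambda>\<omega>. prod_list (map (\<lambda>m. x \<omega> $ m) (filter (\<lambda>m. m \<in> B) L)))" for B
    using assms by (intro integrable_prod_coordinates) (meson dual_order.trans length_filter_le)
  ultimately show ?thesis
    by (subst prod_list_split_blocks) (rule indep_vars_lebesgue_integral[OF finite_blocks])
qed

lemma expectation_prod_coordinates_lonely:
  assumes "length L \<le> 4" "filter (\<lambda>n. block_of n = block_of m) L = [m]"
  shows "expectation (\<lambda>\<omega>. prod_list (map (\<lambda>m. x \<omega> $ m) L)) = 0"
proof -
  have "filter (\<lambda>n. n \<in> block_of m) L = [m]"
    using assms(2) by (metis (mono_tags, lifting) filter_cong in_block_iff[OF block_of_in])
  then have "expectation (\<lambda>\<omega>. prod_list (map (\<lambda>m. x \<omega> $ m) (filter (\<lambda>n. n \<in> block_of m) L))) = 0"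
    using mean_zero by simp
  then show ?thesis
    unfolding expectation_prod_coordinates_factor[OF assms(1)]
    by (rule prod_zero[OF finite_blocks bexI[OF _ block_of_in]])
qed

definition moment4 :: "'n \<Rightarrow> 'n \<Rightarrow> 'n \<Rightarrow> 'n \<Rightarrow> real" where
  "moment4 i j k l = expectation (\<lambda>\<omega>. x \<omega> $ i * x \<omega> $ j * x \<omega> $ k * x \<omega> $ l)"

lemma moment4_eq_prod_list:
  "moment4 i j k l = expectation (\<lambda>\<omega>. prod_list (map (\<lambda>m. x \<omega> $ m) [i, j, k, l]))"
  unfolding moment4_def by (simp add: mult.assoc)

lemma moment4_two_blocks:
  assumes "block_of b = block_of a" "block_of d = block_of c" "block_of a \<noteq> block_of c"
  shows "moment4 a b c d = kronecker a b * kronecker c d"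
proof -
  have "moment4 a b c d
      = (\<Prod>B\<in>P. expectation (\<lambda>\<omega>. prod_list (map (\<lambda>m. x \<omega> $ m) (filter (\<lambda>m. m \<in> B) [a, b, c, d]))))"
    unfolding moment4_eq_prod_list by (rule expectation_prod_coordinates_factor) simp
  also have "\<dots> = (\<Prod>B\<in>P. (if B = block_of a then kronecker a b else 1)
      * (if B = block_of c then kronecker c d else 1))"
  proof (rule prod.cong[OF refl])
    fix B assume "B \<in> P"
    note in_block_iff[OF this]
    then show "expectation (\<lambda>\<omega>. prod_list (map (\<lambda>m. x \<omega> $ m) (filter (\<lambda>m. m \<in> B) [a, b, c, d])))
      = (if B = block_of a then kronecker a b else 1) * (if B = block_of c then kronecker c d else 1)"
      using assms by (cases "B = block_of a"; cases "B = block_of c")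
        (simp_all add: isotropic kronecker_def prob_space)
  qed
  also have "\<dots> = kronecker a b * kronecker c d"
    by (simp add: prod.distrib prod.delta' finite_blocks block_of_in)
  finally show ?thesis .
qed

lemma moment4_not_one_block:
  assumes "\<not> (block_of j = block_of i \<and> block_of k = block_of i \<and> block_of l = block_of i)"
  shows "moment4 i j k l = kronecker i j * kronecker k l
    + of_bool (block_of i \<noteq> block_of j) * (kronecker i k * kronecker j l + kronecker i l * kronecker j k)"
proof -
  have kronecker_zero: "kronecker p q = 0" if "block_of p \<noteq> block_of q" for p q
    using that by (auto simp: kronecker_def)
  from four_indices_cases[where b = block_of, OF assms] consider
      "block_of j = block_of i" "block_of l = block_of k"
    | "block_of k = block_of i" "block_of l = block_of j" "block_of j \<noteq> block_of i"
    | "block_of l = block_of i" "block_of k = block_of j" "block_of j \<noteq> block_of i"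
    | m where "m \<in> {i, j, k, l}" "filter (\<lambda>n. block_of n = block_of m) [i, j, k, l] = [m]"
    by blast
  then show ?thesis
  proof cases
    case 1
    then show ?thesis using assms by (simp add: moment4_two_blocks)
  next
    case 2
    have "moment4 i j k l = moment4 i k j l" by (simp add: moment4_def mult_ac)
    also have "\<dots> = kronecker i k * kronecker j l" using 2 by (intro moment4_two_blocks) auto
    finally show ?thesis using 2 kronecker_zero[of i j] kronecker_zero[of i l] by auto
  next
    case 3
    have "moment4 i j k l = moment4 i l j k" by (simp add: moment4_def mult_ac)
    also have "\<dots> = kronecker i l * kronecker j k" using 3 by (intro moment4_two_blocks) auto
    finally show ?thesis using 3 kronecker_zero[of i j] kronecker_zero[of i k] by auto
  next
    case 4
    then have "moment4 i j k l = 0"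
      unfolding moment4_eq_prod_list by (intro expectation_prod_coordinates_lonely) auto
    with filter_singleton_unpaired[OF 4] show ?thesis by (simp add: kronecker_def)
  qed
qed

definition quad_form :: "real^'n^'n \<Rightarrow> 'n set \<Rightarrow> 'a \<Rightarrow> real" where
  "quad_form A I \<omega> = (\<Sum>i\<in>I. \<Sum>j\<in>I. A $ i $ j * (x \<omega> $ i * x \<omega> $ j))"

lemma inner_mult_eq_quad_form: "x \<omega> \<bullet> (A *v x \<omega>) = quad_form A UNIV \<omega>"
  by (simp add: quad_form_def inner_vec_def matrix_vector_mult_def sum_distrib_left mult_ac)

lemma power2_quad_form: "(quad_form A I \<omega>)\<^sup>2 = (\<Sum>i\<in>I. \<Sum>j\<in>I. \<Sum>k\<in>I. \<Sum>l\<in>I.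
    (A $ i $ j * A $ k $ l) * (x \<omega> $ i * x \<omega> $ j * x \<omega> $ k * x \<omega> $ l))"
  unfolding quad_form_def power2_double_sum by (simp add: mult_ac)

lemma integrable_quad_form: "integrable M (quad_form A I)"
  and expectation_quad_form: "expectation (quad_form A I) = (\<Sum>i\<in>I. \<Sum>j\<in>I. A $ i $ j * kronecker i j)"
  using integrable_prod_coordinates[of "[_, _]"] unfolding quad_form_def[abs_def]
  by (simp_all add: isotropic kronecker_def)

lemma integrable_quad_form_square: "integrable M (\<lambda>\<omega>. (quad_form A I \<omega>)\<^sup>2)"
  and expectation_quad_form_square: "expectation (\<lambda>\<omega>. (quad_form A I \<omega>)\<^sup>2)
    = (\<Sum>i\<in>I. \<Sum>j\<in>I. \<Sum>k\<in>I. \<Sum>l\<in>I. (A $ i $ j * A $ k $ l) * moment4 i j k l)"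
  using integrable_prod_coordinates[of "[_, _, _, _]"]
  by (simp_all add: power2_quad_form moment4_def mult.assoc)

definition one_block :: "'n \<Rightarrow> 'n \<Rightarrow> 'n \<Rightarrow> 'n \<Rightarrow> real" where
  "one_block i j k l = of_bool (block_of j = block_of i) * of_bool (block_of k = block_of i)
    * of_bool (block_of l = block_of i)"

lemma sum_one_block:
  "(\<Sum>i\<in>UNIV. \<Sum>j\<in>UNIV. \<Sum>k\<in>UNIV. \<Sum>l\<in>UNIV. one_block i j k l * F i j k l)
    = (\<Sum>B\<in>P. \<Sum>i\<in>B. \<Sum>j\<in>B. \<Sum>k\<in>B. \<Sum>l\<in>B. F i j k l)"
  by (simp only: sum_blocks sum_block_of one_block_def sum_distrib_left mult.assoc)

lemma moment4_centered_split:
  "(A $ i $ j * A $ k $ l) * moment4 i j k l - (A $ i $ j * kronecker i j) * (A $ k $ l * kronecker k l)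
    = one_block i j k l * ((A $ i $ j * A $ k $ l) * moment4 i j k l)
      - one_block i j k l * ((A $ i $ j * kronecker i j) * (A $ k $ l * kronecker k l))
      + of_bool (block_of i \<noteq> block_of j) * A $ i $ j
        * (A $ k $ l * (kronecker i k * kronecker j l + kronecker i l * kronecker j k))"
proof (cases "block_of j = block_of i \<and> block_of k = block_of i \<and> block_of l = block_of i")
  case True
  then show ?thesis by (simp add: one_block_def)
next
  case False
  then have "one_block i j k l = 0" by (auto simp: one_block_def)
  then show ?thesis by (simp add: moment4_not_one_block[OF False] algebra_simps)
qed

lemma variance_quad_form_eq:
  "var_of M (quad_form A UNIV)
    = (\<Sum>B\<in>P. expectation (\<lambda>\<omega>. (quad_form A B \<omega>)\<^sup>2))
      - (\<Sum>B\<in>P. (expectation (quad_form A B))\<^sup>2)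
      + (\<Sum>i\<in>UNIV. \<Sum>j\<in>UNIV. of_bool (block_of i \<noteq> block_of j) * ((A $ i $ j)\<^sup>2 + A $ i $ j * A $ j $ i))"
proof -
  have "var_of M (quad_form A UNIV) = (\<Sum>i\<in>UNIV. \<Sum>j\<in>UNIV. \<Sum>k\<in>UNIV. \<Sum>l\<in>UNIV.
      (A $ i $ j * A $ k $ l) * moment4 i j k l - (A $ i $ j * kronecker i j) * (A $ k $ l * kronecker k l))"
    by (simp add: var_of_eq integrable_quad_form integrable_quad_form_square expectation_quad_form
        expectation_quad_form_square power2_double_sum sum_subtractf)
  also have "\<dots> = (\<Sum>B\<in>P. \<Sum>i\<in>B. \<Sum>j\<in>B. \<Sum>k\<in>B. \<Sum>l\<in>B. (A $ i $ j * A $ k $ l) * moment4 i j k l)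
      - (\<Sum>B\<in>P. \<Sum>i\<in>B. \<Sum>j\<in>B. \<Sum>k\<in>B. \<Sum>l\<in>B. (A $ i $ j * kronecker i j) * (A $ k $ l * kronecker k l))
      + (\<Sum>i\<in>UNIV. \<Sum>j\<in>UNIV. of_bool (block_of i \<noteq> block_of j) * A $ i $ j
        * (\<Sum>k\<in>UNIV. \<Sum>l\<in>UNIV. A $ k $ l * (kronecker i k * kronecker j l + kronecker i l * kronecker j k)))"
    by (simp only: moment4_centered_split sum.distrib sum_subtractf sum_one_block sum_distrib_left)
  also have "(\<Sum>B\<in>P. \<Sum>i\<in>B. \<Sum>j\<in>B. \<Sum>k\<in>B. \<Sum>l\<in>B. (A $ i $ j * A $ k $ l) * moment4 i j k l)
      = (\<Sum>B\<in>P. expectation (\<lambda>\<omega>. (quad_form A B \<omega>)\<^sup>2))"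
    by (simp add: expectation_quad_form_square)
  also have "(\<Sum>B\<in>P. \<Sum>i\<in>B. \<Sum>j\<in>B. \<Sum>k\<in>B. \<Sum>l\<in>B. (A $ i $ j * kronecker i j) * (A $ k $ l * kronecker k l))
      = (\<Sum>B\<in>P. (expectation (quad_form A B))\<^sup>2)"
    by (simp add: expectation_quad_form power2_double_sum)
  also have "(\<Sum>i\<in>UNIV. \<Sum>j\<in>UNIV. of_bool (block_of i \<noteq> block_of j) * A $ i $ j
        * (\<Sum>k\<in>UNIV. \<Sum>l\<in>UNIV. A $ k $ l * (kronecker i k * kronecker j l + kronecker i l * kronecker j k)))
      = (\<Sum>i\<in>UNIV. \<Sum>j\<in>UNIV. of_bool (block_of i \<noteq> block_of j) * ((A $ i $ j)\<^sup>2 + A $ i $ j * A $ j $ i))"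
    by (simp only: sum_mult_kronecker_sym[of "\<lambda>k l. A $ k $ l"]) (simp add: power2_eq_square algebra_simps)
  finally show ?thesis .
qed

lemma expectation_square_quad_form_le:
  "expectation (\<lambda>\<omega>. (quad_form A B \<omega>)\<^sup>2)
    \<le> (onorm (\<lambda>v. A *v v))\<^sup>2 * ((real (card B))\<^sup>2 * (MAX i. expectation (\<lambda>\<omega>. (x \<omega> $ i) ^ 4)))"
proof -
  let ?K = "MAX i. expectation (\<lambda>\<omega>. (x \<omega> $ i) ^ 4)"
  have "expectation (\<lambda>\<omega>. (quad_form A B \<omega>)\<^sup>2)
      \<le> expectation (\<lambda>\<omega>. (onorm (\<lambda>v. A *v v))\<^sup>2 * (real (card B) * (\<Sum>i\<in>B. (x \<omega> $ i) ^ 4)))"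
    using integrable_power4 unfolding quad_form_def
    by (intro integral_mono[OF integrable_quad_form_square[unfolded quad_form_def]]
        restricted_quadratic_form_square_le) auto
  also have "\<dots> = (onorm (\<lambda>v. A *v v))\<^sup>2 * (real (card B) * (\<Sum>i\<in>B. expectation (\<lambda>\<omega>. (x \<omega> $ i) ^ 4)))"
    using integrable_power4 by simp
  also have "\<dots> \<le> (onorm (\<lambda>v. A *v v))\<^sup>2 * (real (card B) * (real (card B) * ?K))"
    by (intro mult_left_mono sum_bounded_above Max_ge) auto
  finally show ?thesis by (simp add: power2_eq_square mult_ac)
qed

lemma variance_quad_form_le:
  "var_of M (\<lambda>\<omega>. x \<omega> \<bullet> (A *v x \<omega>))
    \<le> (onorm (\<lambda>v. A *v v))\<^sup>2 *
       ((MAX i. expectation (\<lambda>\<omega>. (x \<omega> $ i) ^ 4)) * (\<Sum>B\<in>P. (real (card B))\<^sup>2) + 2 * real CARD('n))"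
proof -
  let ?K = "MAX i. expectation (\<lambda>\<omega>. (x \<omega> $ i) ^ 4)"
  let ?N = "(onorm (\<lambda>v. A *v v))\<^sup>2"
  have "(\<Sum>B\<in>P. expectation (\<lambda>\<omega>. (quad_form A B \<omega>)\<^sup>2)) \<le> (\<Sum>B\<in>P. ?N * ((real (card B))\<^sup>2 * ?K))"
    by (intro sum_mono expectation_square_quad_form_le)
  moreover have "0 \<le> (\<Sum>B\<in>P. (expectation (quad_form A B))\<^sup>2)"
    by (intro sum_nonneg) simp
  moreover have "(\<Sum>i\<in>UNIV. \<Sum>j\<in>UNIV. of_bool (block_of i \<noteq> block_of j) * ((A $ i $ j)\<^sup>2 + A $ i $ j * A $ j $ i))
      \<le> 2 * (real CARD('n) * ?N)"
    using sum_masked_square_add_transpose_le[of "\<lambda>i j. block_of i \<noteq> block_of j" A]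
      sum_square_entries_le_onorm[of A] by linarith
  ultimately show ?thesis
    unfolding inner_mult_eq_quad_form variance_quad_form_eq
    by (simp add: sum_distrib_left sum_distrib_right algebra_simps)
qed

end

theorem theorem1p6:
  fixes M :: "'a measure" and x :: "'a \<Rightarrow> real^'n::finite"
    and P :: "'n set set" and A :: "real^'n^'n"
  assumes "block_independent_model M x P"
    and "\<And>i. integrable M (\<lambda>\<omega>. (x \<omega> $ i) ^ 4)"
  shows "var_of M (\<lambda>\<omega>. x \<omega> \<bullet> (A *v x \<omega>))
         \<le> (onorm (\<lambda>v. A *v v))\<^sup>2 *
            ((MAX i. integral\<^sup>L M (\<lambda>\<omega>. (x \<omega> $ i) ^ 4)) * (\<Sum>B\<in>P. (real (card B))\<^sup>2)
             + 2 * real CARD('n))"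
proof -
  interpret block_independent M x P
    using assms unfolding block_independent_model_def block_independent_def block_independent_axioms_def
    by auto
  show ?thesis by (rule variance_quad_form_le)
qed

end
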